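(* Let $B$ be a real-valued standard Brownian motion with $B_0=0$. With probability one, there exists an integer $N\ge1$ such that for every $n\ge N$ and every integer $\ell\in[2^{n-1},2^n-n^{3/2}]$, at least one of the intervals $I_k=[\ell+k,\ell+k+1]$, for integers $k$ with $0\le k\le n^{3/2}-1$, satisfies $\mathrm{Osc}_{I_k}(B)>\log\log n$.
   Context: For a function $f:\mathbb R^+\to\mathbb R$ and an interval $I\subset\mathbb R^+$, $\mathrm{Osc}_I(f)=\sup_I f-\inf_I f$. *)

theory Defs
  imports "HOL-Probability.Probability"
begin

text \<open>Standard real-valued Brownian motion started at 0 on the probability space M,
  indexed by time t \<ge> 0 (values of B at negative times are irrelevant).\<close>
definition brownian_motion :: "'a measure \<Rightarrow> (real \<Rightarrow> 'a \<Rightarrow> real) \<Rightarrow> bool" where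
  "brownian_motion M B \<longleftrightarrow>
     prob_space M \<and>
     (\<forall>t\<ge>0. B t \<in> borel_measurable M) \<and>
     (AE \<omega> in M. B 0 \<omega> = 0) \<and>
     (AE \<omega> in M. continuous_on {0..} (\<lambda>t. B t \<omega>)) \<and>
     (\<forall>s t. 0 \<le> s \<and> s < t \<longrightarrow>
        distributed M lborel (\<lambda>\<omega>. B t \<omega> - B s \<omega>) (normal_density 0 (sqrt (t - s)))) \<and>
     (\<forall>(ts::nat \<Rightarrow> real) n. 0 \<le> ts 0 \<and> (\<forall>i<n. ts i < ts (Suc i)) \<longrightarrow>
        prob_space.indep_vars M (\<lambda>_. borel) (\<lambda>i \<omega>. B (ts (Suc i)) \<omega> - B (ts i) \<omega>) {..<n})"

definition Osc :: "(real \<Rightarrow> real) \<Rightarrow> real \<Rightarrow> real \<Rightarrow> real" where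
  "Osc f a b = (SUP t\<in>{a..b}. f t) - (INF t\<in>{a..b}. f t)"

end

theory Submission
  imports Defs "HOL-Real_Asymp.Real_Asymp"
begin

text \<open>
  For every integer starting point \<open>j \<le> 2^n\<close> consider the run of \<open>m = \<lfloor>n^{3/2}\<rfloor>\<close>
  consecutive unit intervals beginning at j. The unit increments of B are independent standard
  Gaussians, each exceeding \<open>c = ln ln n\<close> in absolute value with probability at least
  \<open>p = \<phi>(c + 1)\<close>. Hence a fixed run has all its increments below c with probability at most
  \<open>(1 - p)^m \<le> exp (-p m)\<close>, and since \<open>p m\<close> grows faster than any multiple of n, a union bound
  over the 2^n + 1 starting points still gives a summable sequence. By Borel--Cantelli, almost surely every run eventually contains a large increment,
  and an increment over a unit interval is bounded by the oscillation there.
\<close>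

lemma abs_diff_le_Osc:
  fixes f :: "real \<Rightarrow> real"
  assumes "continuous_on {a..b} f" "a \<le> b"
  shows "\<bar>f b - f a\<bar> \<le> Osc f a b"
proof -
  have "compact (f ` {a..b})"
    using assms(1) compact_continuous_image by blast
  hence "bdd_above (f ` {a..b})" "bdd_below (f ` {a..b})"
    by (auto intro: bounded_imp_bdd_above bounded_imp_bdd_below compact_imp_bounded)
  hence "f a \<le> (SUP t\<in>{a..b}. f t)" "f b \<le> (SUP t\<in>{a..b}. f t)"
        "(INF t\<in>{a..b}. f t) \<le> f a" "(INF t\<in>{a..b}. f t) \<le> f b"
    using assms(2) by (auto intro!: cSUP_upper cINF_lower)
  thus ?thesis
    unfolding Osc_def by linarith
qed

lemma Osc_unit_interval_gt:
  fixes f :: "real \<Rightarrow> real"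
  assumes "continuous_on {0..} f" "0 \<le> a" "c < \<bar>f (a + 1) - f a\<bar>"
  shows "c < Osc f a (a + 1)"
proof -
  have "continuous_on {a..a + 1} f"
    using assms(2) by (intro continuous_on_subset[OF assms(1)]) auto
  hence "\<bar>f (a + 1) - f a\<bar> \<le> Osc f a (a + 1)"
    by (rule abs_diff_le_Osc) simp
  with assms(3) show ?thesis
    by linarith
qed

lemma (in prob_space) std_normal_density_le_prob_abs_gt:
  assumes X: "distributed M lborel X std_normal_density" and "0 \<le> c"
  shows "std_normal_density (c + 1) \<le> prob {\<omega>\<in>space M. c < \<bar>X \<omega>\<bar>}"
proof -
  have [measurable]: "X \<in> borel_measurable M"
    using X distributed_measurable by force
  have density_mono: "std_normal_density (c + 1) \<le> std_normal_density x" if "x \<in> {c<..<c+1}" for x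
  proof -
    have "x\<^sup>2 \<le> (c + 1)\<^sup>2"
      using that \<open>0 \<le> c\<close> by (intro power_mono) auto
    thus ?thesis
      unfolding std_normal_density_def by (intro mult_left_mono) auto
  qed
  have "ennreal (std_normal_density (c + 1))
          = (\<integral>\<^sup>+x. ennreal (std_normal_density (c + 1)) * indicator {c<..<c+1} x \<partial>lborel)"
    by (simp add: nn_integral_cmult_indicator)
  also have "\<dots> \<le> (\<integral>\<^sup>+x. ennreal (std_normal_density x) * indicator {c<..<c+1} x \<partial>lborel)"
    by (intro nn_integral_mono) (auto simp: indicator_def intro: ennreal_leI density_mono)
  also have "\<dots> = emeasure M (X -` {c<..<c+1} \<inter> space M)"
    using distributed_emeasure[OF X, of "{c<..<c+1}"] by simp
  also have "\<dots> \<le> emeasure M {\<omega>\<in>space M. c < \<bar>X \<omega>\<bar>}"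
    by (intro emeasure_mono) auto
  finally show ?thesis
    by (simp add: emeasure_eq_measure)
qed

lemma (in prob_space) prob_all_abs_le_indep_std_normal:
  assumes indep: "indep_vars (\<lambda>_. borel) X {..<m}"
    and X: "\<And>k. k < m \<Longrightarrow> distributed M lborel (X k) std_normal_density"
    and "0 \<le> c"
  shows "prob {\<omega>\<in>space M. \<forall>k<m. \<bar>X k \<omega>\<bar> \<le> c} \<le> (1 - std_normal_density (c + 1)) ^ m"
proof (cases "m = 0")
  case False
  define E where "E k = X k -` {-c..c} \<inter> space M" for k
  have [measurable]: "X k \<in> borel_measurable M" if "k < m" for k
    using X[OF that] distributed_measurable by force
  have prob_E: "prob (E k) \<le> 1 - std_normal_density (c + 1)" if "k < m" for k
  proof -
    have "E k = space M - {\<omega>\<in>space M. c < \<bar>X k \<omega>\<bar>}"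
      unfolding E_def by auto
    moreover have "{\<omega>\<in>space M. c < \<bar>X k \<omega>\<bar>} \<in> events"
      using that by measurable
    ultimately show ?thesis
      using std_normal_density_le_prob_abs_gt[OF X[OF that] \<open>0 \<le> c\<close>] by (simp add: prob_compl)
  qed
  have "{\<omega>\<in>space M. \<forall>k<m. \<bar>X k \<omega>\<bar> \<le> c} = (\<Inter>k\<in>{..<m}. E k)"
    using False unfolding E_def by (auto simp: abs_le_iff)
  also have "indep_sets (\<lambda>k. {X k -` A \<inter> space M | A. A \<in> sets borel}) {..<m}"
    using indep unfolding indep_vars_def2 by blast
  hence "prob (\<Inter>k\<in>{..<m}. E k) = (\<Prod>k<m. prob (E k))"
    by (rule indep_setsD) (use False in \<open>auto simp: E_def\<close>)
  also have "\<dots> \<le> (\<Prod>k<m. 1 - std_normal_density (c + 1))"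
    using prob_E by (intro prod_mono) auto
  finally show ?thesis
    by simp
qed simp

lemma brownian_motion_prob_small_unit_increments:
  assumes bm: "brownian_motion M B" and "0 \<le> a" "0 \<le> c"
  shows "measure M {\<omega>\<in>space M. \<forall>k<m. \<bar>B (a + real k + 1) \<omega> - B (a + real k) \<omega>\<bar> \<le> c}
           \<le> (1 - std_normal_density (c + 1)) ^ m"
proof -
  interpret prob_space M
    using bm unfolding brownian_motion_def by blast
  have increment_distributed: "\<forall>s t. 0 \<le> s \<and> s < t \<longrightarrow>
      distributed M lborel (\<lambda>\<omega>. B t \<omega> - B s \<omega>) (normal_density 0 (sqrt (t - s)))"
    and increments_indep: "\<forall>(ts::nat \<Rightarrow> real) n. 0 \<le> ts 0 \<and> (\<forall>i<n. ts i < ts (Suc i)) \<longrightarrow>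
      indep_vars (\<lambda>_. borel) (\<lambda>i \<omega>. B (ts (Suc i)) \<omega> - B (ts i) \<omega>) {..<n}"
    using bm unfolding brownian_motion_def by blast+
  define X where "X k \<omega> = B (a + real (Suc k)) \<omega> - B (a + real k) \<omega>" for k \<omega>
  have "indep_vars (\<lambda>_. borel) X {..<m}"
    using increments_indep[rule_format, of "\<lambda>i. a + real i" m] \<open>0 \<le> a\<close>
    unfolding X_def[abs_def] by simp
  moreover have "distributed M lborel (X k) std_normal_density" for k
    using increment_distributed[rule_format, of "a + real k" "a + real (Suc k)"] \<open>0 \<le> a\<close>
    unfolding X_def[abs_def] by simp
  ultimately have "prob {\<omega>\<in>space M. \<forall>k<m. \<bar>X k \<omega>\<bar> \<le> c} \<le> (1 - std_normal_density (c + 1)) ^ m"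
    by (rule prob_all_abs_le_indep_std_normal[OF _ _ \<open>0 \<le> c\<close>])
  thus ?thesis
    by (simp add: X_def add.commute add.left_commute)
qed

lemma union_bound_small_runs_le_exp:
  "\<forall>\<^sub>F n in sequentially. (2 ^ n + 1) * (1 - std_normal_density (ln (ln (real n)) + 1))
       ^ nat \<lfloor>real n powr (3/2)\<rfloor> \<le> exp (- real n)"
proof -
  \<comment> \<open>\<open>real_asymp\<close> cannot handle the floor, so the run length is replaced by \<open>n^{3/2} - 1\<close>.\<close>
  have "\<forall>\<^sub>F x in at_top. (2 powr x + 1) * exp (- (exp (- (ln (ln x) + 1)\<^sup>2 / 2) / sqrt (2 * pi))
          * (x powr (3/2) - 1)) \<le> exp (- x)"
    by real_asymp
  from eventually_compose_filterlim[OF this filterlim_real_sequentially]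
  have "\<forall>\<^sub>F n in sequentially. (2 ^ n + 1) * exp (- std_normal_density (ln (ln (real n)) + 1)
          * (real n powr (3/2) - 1)) \<le> exp (- real n)"
    by (simp add: std_normal_density_def powr_realpow)
  thus ?thesis
  proof eventually_elim
    case (elim n)
    define p where "p = std_normal_density (ln (ln (real n)) + 1)"
    define m where "m = nat \<lfloor>real n powr (3/2)\<rfloor>"
    have "p \<le> 1"
      using pi_gt3 unfolding p_def std_normal_density_def
      by (intro mult_le_one) (auto simp: divide_simps)
    have "0 \<le> p"
      unfolding p_def by simp
    have "(1 - p) ^ m \<le> exp (- p) ^ m"
      using \<open>p \<le> 1\<close> by (intro power_mono) (auto simp: exp_ge_add_one_self[of "- p", simplified])
    also have "\<dots> = exp (- p * real m)"
      by (simp add: exp_of_nat_mult[symmetric] mult.commute)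
    also have "\<dots> \<le> exp (- p * (real n powr (3/2) - 1))"
      using \<open>0 \<le> p\<close> unfolding m_def by (intro exp_mono mult_left_mono_neg) linarith+
    finally have "(2 ^ n + 1) * (1 - p) ^ m \<le> (2 ^ n + 1) * exp (- p * (real n powr (3/2) - 1))"
      by (intro mult_left_mono) auto
    with elim show ?case
      unfolding p_def m_def by linarith
  qed
qed

lemma brownian_motion_AE_eventually_large_unit_increment:
  assumes bm: "brownian_motion M B"
  shows "AE \<omega> in M. \<forall>\<^sub>F n in sequentially. \<forall>j\<le>(2::nat) ^ n. \<exists>k < nat \<lfloor>real n powr (3/2)\<rfloor>.
           ln (ln (real n)) < \<bar>B (real j + real k + 1) \<omega> - B (real j + real k) \<omega>\<bar>"
proof -
  interpret prob_space M
    using bm unfolding brownian_motion_def by blast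
  have [measurable]: "B t \<in> borel_measurable M" if "0 \<le> t" for t
    using bm that unfolding brownian_motion_def by blast
  define c where "c n = ln (ln (real n))" for n :: nat
  define m where "m n = nat \<lfloor>real n powr (3/2)\<rfloor>" for n :: nat
  define A where "A n = (\<Union>j\<le>(2::nat) ^ n. {\<omega>\<in>space M.
                    \<forall>k<m n. \<bar>B (real j + real k + 1) \<omega> - B (real j + real k) \<omega>\<bar> \<le> c n})" for n
  have A_events: "A n \<in> events" for n
    unfolding A_def by measurable
  have "\<forall>\<^sub>F n in sequentially. 0 \<le> c n"
    unfolding c_def by real_asymp
  hence "\<forall>\<^sub>F n in sequentially. norm (prob (A n)) \<le> exp (- real n)"
    using union_bound_small_runs_le_exp unfolding c_def[symmetric] m_def[symmetric]
  proof eventually_elim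
    case (elim n)
    have "prob (A n) \<le> (\<Sum>j\<le>(2::nat) ^ n. (1 - std_normal_density (c n + 1)) ^ m n)"
      unfolding A_def using A_events elim(1)
      by (intro finite_measure_subadditive_finite[THEN order.trans] sum_mono
            brownian_motion_prob_small_unit_increments[OF bm]) auto
    with elim(2) show ?case
      by (simp add: add.commute)
  qed
  moreover have "summable (\<lambda>n. exp (- real n))"
    using summable_geometric[of "exp (-1) :: real"] by (simp add: exp_of_nat_mult[symmetric] mult.commute)
  ultimately have "summable (\<lambda>n. prob (A n))"
    by (rule summable_comparison_test_ev)
  hence "AE \<omega> in M. \<forall>\<^sub>F n in sequentially. \<omega> \<in> space M - A n"
    using A_events by (intro borel_cantelli_AE1) (auto simp: emeasure_eq_measure)
  thus ?thesis
    by eventually_elim (auto simp: A_def c_def m_def not_le elim!: eventually_mono)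
qed

theorem lemma5:
  fixes M :: "'a measure" and B :: "real \<Rightarrow> 'a \<Rightarrow> real"
  assumes "brownian_motion M B"
  shows "AE \<omega> in M. \<exists>N::nat. N \<ge> 1 \<and>
           (\<forall>n::nat. n \<ge> N \<longrightarrow>
             (\<forall>l::int. 2 ^ (n - 1) \<le> real_of_int l \<and> real_of_int l \<le> 2 ^ n - real n powr (3/2) \<longrightarrow>
               (\<exists>k::int. 0 \<le> k \<and> real_of_int k \<le> real n powr (3/2) - 1 \<and>
                  Osc (\<lambda>t. B t \<omega>) (real_of_int (l + k)) (real_of_int (l + k + 1)) > ln (ln (real n)))))"
proof -
  have "AE \<omega> in M. continuous_on {0..} (\<lambda>t. B t \<omega>)"
    using assms unfolding brownian_motion_def by blast
  with brownian_motion_AE_eventually_large_unit_increment[OF assms] show ?thesis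
  proof eventually_elim
    case (elim \<omega>)
    from elim(1) obtain N where N: "\<And>n j. N \<le> n \<Longrightarrow> j \<le> (2::nat) ^ n \<Longrightarrow> \<exists>k < nat \<lfloor>real n powr (3/2)\<rfloor>.
        ln (ln (real n)) < \<bar>B (real j + real k + 1) \<omega> - B (real j + real k) \<omega>\<bar>"
      by (auto simp: eventually_sequentially)
    show ?case
    proof (intro exI[of _ "max 1 N"] conjI allI impI)
      fix n :: nat and l :: int
      assume "max 1 N \<le> n"
      assume l: "2 ^ (n - 1) \<le> real_of_int l \<and> real_of_int l \<le> 2 ^ n - real n powr (3/2)"
      moreover have "(1::real) \<le> 2 ^ (n - 1)" "0 \<le> real n powr (3/2)"
        by simp_all
      ultimately have "1 \<le> l" "real_of_int l \<le> 2 ^ n"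
        by linarith+
      hence "l = int (nat l)" "nat l \<le> 2 ^ n"
        by (simp_all add: le_nat_iff flip: of_int_le_iff)
      then obtain j :: nat where j: "l = int j" "j \<le> 2 ^ n"
        by blast
      then obtain k where k: "k < nat \<lfloor>real n powr (3/2)\<rfloor>"
          "ln (ln (real n)) < \<bar>B (real j + real k + 1) \<omega> - B (real j + real k) \<omega>\<bar>"
        using N[of n j] \<open>max 1 N \<le> n\<close> by auto
      have "real k + 1 \<le> real n powr (3/2)"
        using k(1) by linarith
      with Osc_unit_interval_gt[OF elim(2) _ k(2)]
      show "\<exists>k::int. 0 \<le> k \<and> real_of_int k \<le> real n powr (3/2) - 1 \<and>
          Osc (\<lambda>t. B t \<omega>) (real_of_int (l + k)) (real_of_int (l + k + 1)) > ln (ln (real n))"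
        by (intro exI[of _ "int k"]) (auto simp: j(1) add.assoc)
    qed simp
  qed
qed

end
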